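(* Let $G\in\mathcal{RG}^{{\underline{\kappa}},*}_{g,n}$ be non-bipartite, $w$ a weight function on $G$ with $\operatorname{vp}_G(w)=\underline b$, and $e\in S(G)$ a static edge. (1) If $e$ is a bridge, let $G'$ be the bipartite connected component of $G-e$, colored black/white so that $e$ is incident to a black vertex, and let $I,J\subset\{1,\dots,n\}$ be the labels of black and white vertices of $G'$. Then $w(e)=\sum_{i\in I}b_i-\sum_{j\in J}b_j$. (2) If $e$ is not a bridge, then $G-e$ is connected and bipartite; color it so that both endpoints of $e$ are black and let $I,J$ be the labels of black and white vertices. Then $I\cup J=\{1,\dots,n\}$ and $w(e)=\tfrac12\bigl(\sum_{i\in I}b_i-\sum_{j\in J}b_j\bigr)$.
   Context: A ribbon graph is a finite graph (loops and multiple edges allowed) with a cyclic ordering of half-edges at each vertex; the cyclic orders determine faces (boundary cycles) and the genus. For a partition ${\underline{\kappa}}$ with all parts odd, $\mathcal{RG}^{{\underline{\kappa}},*}_{g,n}$ is the set of isomorphism classes of connected ribbon graphs of genus $g$ with $n$ vertices labeled $1,\dots,n$ and face degrees given by ${\underline{\kappa}}$ (the duals of ribbon graphs with $n$ labeled faces and vertex degrees ${\underline{\kappa}}$). A weight function is any $w:E(G)\to\mathbb R$; its vertex perimeters are $\operatorname{vp}_G(w)_v=\sum_e a_{ve}w(e)$ with $a_{ve}=2$ if $e$ is a loop at $v$, $1$ if $e$ is a non-loop edge incident to $v$, $0$ otherwise. For non-bipartite $G$, an edge $e$ is static if at least one connected component of $G-e$ is bipartite; $S(G)$ is the set of static edges.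 *)

theory Defs
  imports Complex_Main "HOL-Library.Multiset" "HOL-Combinatorics.Permutations"
begin

text \<open>Combinatorial ribbon graphs: a finite set H of half-edges, a permutation
  sigma of H (cyclic order at vertices) and a fixed-point-free involution alpha of H
  (edges).\<close>

definition rg_orbit :: "('h \<Rightarrow> 'h) \<Rightarrow> 'h \<Rightarrow> 'h set" where
  "rg_orbit f h = {(f ^^ k) h | k. True}"

definition rg_vertices :: "'h set \<Rightarrow> ('h \<Rightarrow> 'h) \<Rightarrow> 'h set set" where
  "rg_vertices H \<sigma> = {rg_orbit \<sigma> h | h. h \<in> H}"

definition rg_edges :: "'h set \<Rightarrow> ('h \<Rightarrow> 'h) \<Rightarrow> 'h set set" where
  "rg_edges H \<alpha> = {{h, \<alpha> h} | h. h \<in> H}"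

definition rg_faces :: "'h set \<Rightarrow> ('h \<Rightarrow> 'h) \<Rightarrow> ('h \<Rightarrow> 'h) \<Rightarrow> 'h set set" where
  "rg_faces H \<sigma> \<alpha> = {rg_orbit (\<sigma> \<circ> \<alpha>) h | h. h \<in> H}"

definition ribbon_graph :: "'h set \<Rightarrow> ('h \<Rightarrow> 'h) \<Rightarrow> ('h \<Rightarrow> 'h) \<Rightarrow> bool" where
  "ribbon_graph H \<sigma> \<alpha> \<longleftrightarrow> finite H \<and> \<sigma> permutes H \<and> \<alpha> permutes H \<and>
     (\<forall>h\<in>H. \<alpha> (\<alpha> h) = h \<and> \<alpha> h \<noteq> h)"

definition vertex_labelling :: "'h set \<Rightarrow> ('h \<Rightarrow> 'h) \<Rightarrow> ('h \<Rightarrow> nat) \<Rightarrow> nat \<Rightarrow> bool" where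
  "vertex_labelling H \<sigma> lab n \<longleftrightarrow> lab ` H = {1..n} \<and>
     (\<forall>h\<in>H. \<forall>h'\<in>H. lab h = lab h' \<longleftrightarrow> h' \<in> rg_orbit \<sigma> h)"

definition rg_adj :: "'h set \<Rightarrow> ('h \<Rightarrow> 'h) \<Rightarrow> ('h \<Rightarrow> nat) \<Rightarrow> 'h set set \<Rightarrow> nat \<Rightarrow> nat \<Rightarrow> bool" where
  "rg_adj H \<alpha> lab F u v \<longleftrightarrow> (\<exists>h\<in>H. {h, \<alpha> h} \<in> F \<and> lab h = u \<and> lab (\<alpha> h) = v)"

definition rg_reach :: "'h set \<Rightarrow> ('h \<Rightarrow> 'h) \<Rightarrow> ('h \<Rightarrow> nat) \<Rightarrow> 'h set set \<Rightarrow> nat \<Rightarrow> nat \<Rightarrow> bool" where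
  "rg_reach H \<alpha> lab F = (rg_adj H \<alpha> lab F)\<^sup>*\<^sup>*"

definition rg_connected :: "'h set \<Rightarrow> ('h \<Rightarrow> 'h) \<Rightarrow> ('h \<Rightarrow> nat) \<Rightarrow> nat \<Rightarrow> 'h set set \<Rightarrow> bool" where
  "rg_connected H \<alpha> lab n F \<longleftrightarrow> (\<forall>u\<in>{1..n}. \<forall>v\<in>{1..n}. rg_reach H \<alpha> lab F u v)"

definition rg_component :: "'h set \<Rightarrow> ('h \<Rightarrow> 'h) \<Rightarrow> ('h \<Rightarrow> nat) \<Rightarrow> nat \<Rightarrow> 'h set set \<Rightarrow> nat set \<Rightarrow> bool" where
  "rg_component H \<alpha> lab n F C \<longleftrightarrow>
     (\<exists>u\<in>{1..n}. C = {v\<in>{1..n}. rg_reach H \<alpha> lab F u v})"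

text \<open>col is a proper black(True)/white(False) colouring of the subgraph on vertex set C
  (C a union of components) with edge set F.\<close>
definition proper_colouring :: "'h set \<Rightarrow> ('h \<Rightarrow> 'h) \<Rightarrow> ('h \<Rightarrow> nat) \<Rightarrow> 'h set set \<Rightarrow> nat set \<Rightarrow> (nat \<Rightarrow> bool) \<Rightarrow> bool" where
  "proper_colouring H \<alpha> lab F C col \<longleftrightarrow>
     (\<forall>h\<in>H. {h, \<alpha> h} \<in> F \<and> lab h \<in> C \<longrightarrow> col (lab h) \<noteq> col (lab (\<alpha> h)))"

definition rg_bipartite :: "'h set \<Rightarrow> ('h \<Rightarrow> 'h) \<Rightarrow> ('h \<Rightarrow> nat) \<Rightarrow> 'h set set \<Rightarrow> nat set \<Rightarrow> bool" where
  "rg_bipartite H \<alpha> lab F C \<longleftrightarrow> (\<exists>col. proper_colouring H \<alpha> lab F C col)"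

definition in_RG :: "'h set \<Rightarrow> ('h \<Rightarrow> 'h) \<Rightarrow> ('h \<Rightarrow> 'h) \<Rightarrow> ('h \<Rightarrow> nat) \<Rightarrow>
     nat multiset \<Rightarrow> nat \<Rightarrow> nat \<Rightarrow> bool" where
  "in_RG H \<sigma> \<alpha> lab \<kappa> g n \<longleftrightarrow>
     ribbon_graph H \<sigma> \<alpha> \<and> vertex_labelling H \<sigma> lab n \<and>
     rg_connected H \<alpha> lab n (rg_edges H \<alpha>) \<and>
     image_mset card (mset_set (rg_faces H \<sigma> \<alpha>)) = \<kappa> \<and>
     int (card (rg_vertices H \<sigma>)) - int (card (rg_edges H \<alpha>)) + int (card (rg_faces H \<sigma> \<alpha>))
       = 2 - 2 * int g"

definition incid :: "('h \<Rightarrow> 'h) \<Rightarrow> ('h \<Rightarrow> nat) \<Rightarrow> nat \<Rightarrow> 'h set \<Rightarrow> real" where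
  "incid \<alpha> lab v e =
     (if (\<forall>h\<in>e. lab h = v) then 2 else if (\<exists>h\<in>e. lab h = v) then 1 else 0)"

definition vp :: "'h set \<Rightarrow> ('h \<Rightarrow> 'h) \<Rightarrow> ('h \<Rightarrow> nat) \<Rightarrow> ('h set \<Rightarrow> real) \<Rightarrow> nat \<Rightarrow> real" where
  "vp H \<alpha> lab w v = (\<Sum>e\<in>rg_edges H \<alpha>. incid \<alpha> lab v e * w e)"

definition static_edge :: "'h set \<Rightarrow> ('h \<Rightarrow> 'h) \<Rightarrow> ('h \<Rightarrow> nat) \<Rightarrow> nat \<Rightarrow> 'h set \<Rightarrow> bool" where
  "static_edge H \<alpha> lab n e \<longleftrightarrow> e \<in> rg_edges H \<alpha> \<and>
     (\<exists>C. rg_component H \<alpha> lab n (rg_edges H \<alpha> - {e}) C \<and>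
          rg_bipartite H \<alpha> lab (rg_edges H \<alpha> - {e}) C)"

text \<open>For a connected graph, e is a bridge iff G - e is disconnected.\<close>
definition is_bridge :: "'h set \<Rightarrow> ('h \<Rightarrow> 'h) \<Rightarrow> ('h \<Rightarrow> nat) \<Rightarrow> nat \<Rightarrow> 'h set \<Rightarrow> bool" where
  "is_bridge H \<alpha> lab n e \<longleftrightarrow> e \<in> rg_edges H \<alpha> \<and> \<not> rg_connected H \<alpha> lab n (rg_edges H \<alpha> - {e})"

end

theory Submission
  imports Defs
begin

text \<open>Give black vertices the sign \<open>+1\<close> and white ones \<open>-1\<close> and sum the vertex perimeters
  \<open>b\<^sub>v\<close> with these signs over a properly coloured vertex set \<open>C\<close> that is closed under the
  edges of \<open>G - e\<close>. Every edge \<open>f \<noteq> e\<close> has either no endpoint in \<open>C\<close> or two endpoints of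
  opposite colours, so its weight cancels, and only \<open>w(e)\<close> survives, counted with the signs
  of those endpoints of \<open>e\<close> lying in \<open>C\<close>. If \<open>e\<close> is a bridge, \<open>C\<close> is the component of
  \<open>G - e\<close> containing exactly one (black) endpoint of \<open>e\<close>, giving \<open>w(e)\<close>; otherwise
  \<open>C = {1..n}\<close> and both endpoints are black, since a colouring of \<open>G - e\<close> separating them would
  make \<open>G\<close> bipartite, giving \<open>2 w(e)\<close>.\<close>

definition colour_sign :: "(nat \<Rightarrow> bool) \<Rightarrow> nat \<Rightarrow> real" where
  "colour_sign col v = (if col v then 1 else -1)"

lemma sum_colour_sign:
  assumes "finite C"
  shows "(\<Sum>v\<in>C. colour_sign col v * b v) = (\<Sum>i\<in>{v\<in>C. col v}. b i) - (\<Sum>j\<in>{v\<in>C. \<not> col v}. b j)"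
proof -
  have "(\<Sum>v\<in>C. colour_sign col v * b v) = (\<Sum>v\<in>C. if col v then b v else - b v)"
    by (rule sum.cong) (auto simp: colour_sign_def)
  also have "\<dots> = sum b (C \<inter> {v. col v}) + sum (\<lambda>v. - b v) (C \<inter> - {v. col v})"
    by (rule sum.If_cases[OF assms])
  also have "C \<inter> {v. col v} = {v\<in>C. col v}" by auto
  also have "C \<inter> - {v. col v} = {v\<in>C. \<not> col v}" by auto
  finally show ?thesis by (simp add: sum_negf)
qed

lemma incid_edge:
  "incid \<alpha> lab v {h, \<alpha> h} = (if lab h = v then 1 else 0) + (if lab (\<alpha> h) = v then 1 else 0)"
  unfolding incid_def by auto

lemma sum_incid_edge:
  assumes "finite C"
  shows "(\<Sum>v\<in>C. s v * incid \<alpha> lab v {h, \<alpha> h}) =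
    (if lab h \<in> C then s (lab h) else 0) + (if lab (\<alpha> h) \<in> C then s (lab (\<alpha> h)) else 0)"
  using assms
  by (simp add: incid_edge distrib_left sum.distrib if_distrib[where f="\<lambda>x. _ * x"] sum.delta
      cong: if_cong)

lemma finite_rg_edges: "finite H \<Longrightarrow> finite (rg_edges H \<alpha>)"
proof -
  assume "finite H"
  moreover have "rg_edges H \<alpha> = (\<lambda>h. {h, \<alpha> h}) ` H" unfolding rg_edges_def by auto
  ultimately show ?thesis by simp
qed

lemma ribbon_graph_edge_flip:
  assumes "ribbon_graph H \<sigma> \<alpha>" "h \<in> H"
  shows "\<alpha> h \<in> H" "\<alpha> (\<alpha> h) = h" "{\<alpha> h, \<alpha> (\<alpha> h)} = {h, \<alpha> h}"
  using assms unfolding ribbon_graph_def by (auto simp: permutes_in_image)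

lemma rg_adj_sym:
  assumes "ribbon_graph H \<sigma> \<alpha>" "rg_adj H \<alpha> lab F u v"
  shows "rg_adj H \<alpha> lab F v u"
proof -
  from assms(2) obtain h where h: "h \<in> H" "{h, \<alpha> h} \<in> F" "lab h = u" "lab (\<alpha> h) = v"
    unfolding rg_adj_def by auto
  show ?thesis
    unfolding rg_adj_def using h ribbon_graph_edge_flip[OF assms(1) h(1)] by metis
qed

lemma rg_reach_sym:
  assumes "ribbon_graph H \<sigma> \<alpha>" "rg_reach H \<alpha> lab F u v"
  shows "rg_reach H \<alpha> lab F v u"
  using assms(2) unfolding rg_reach_def
proof (induction rule: rtranclp_induct)
  case (step y z)
  from rg_adj_sym[OF assms(1) step(2)] step(3) show ?case
    by (rule converse_rtranclp_into_rtranclp)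
qed simp

lemma rg_component_closed:
  assumes "ribbon_graph H \<sigma> \<alpha>" "lab ` H \<subseteq> {1..n}" "rg_component H \<alpha> lab n F C"
    and "h \<in> H" "{h, \<alpha> h} \<in> F" "lab h \<in> C"
  shows "lab (\<alpha> h) \<in> C"
proof -
  obtain u where u: "C = {v\<in>{1..n}. rg_reach H \<alpha> lab F u v}"
    using assms(3) unfolding rg_component_def by auto
  have "rg_adj H \<alpha> lab F (lab h) (lab (\<alpha> h))" unfolding rg_adj_def using assms(4,5) by auto
  with assms(6) have "rg_reach H \<alpha> lab F u (lab (\<alpha> h))"
    unfolding u rg_reach_def by (auto intro: rtranclp.rtrancl_into_rtrancl)
  moreover have "lab (\<alpha> h) \<in> {1..n}"
    using assms(2) ribbon_graph_edge_flip[OF assms(1,4)] by auto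
  ultimately show ?thesis unfolding u by simp
qed

lemma rg_reach_remove_edge:
  assumes "ribbon_graph H \<sigma> \<alpha>" "h0 \<in> H" "rg_reach H \<alpha> lab E u v"
    and "rg_reach H \<alpha> lab (E - {{h0, \<alpha> h0}}) u (lab h0)"
    and "rg_reach H \<alpha> lab (E - {{h0, \<alpha> h0}}) u (lab (\<alpha> h0))"
  shows "rg_reach H \<alpha> lab (E - {{h0, \<alpha> h0}}) u v"
  using assms(3) unfolding rg_reach_def
proof (induction rule: rtranclp_induct)
  case (step x y)
  from step(2) obtain h where h: "h \<in> H" "{h, \<alpha> h} \<in> E" "lab h = x" "lab (\<alpha> h) = y"
    unfolding rg_adj_def by auto
  show ?case
  proof (cases "{h, \<alpha> h} = {h0, \<alpha> h0}")
    case True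
    then have "h = h0 \<or> h = \<alpha> h0" by (auto simp: doubleton_eq_iff)
    then have "y = lab h0 \<or> y = lab (\<alpha> h0)"
      using h ribbon_graph_edge_flip[OF assms(1,2)] by auto
    with assms(4,5) show ?thesis unfolding rg_reach_def by auto
  next
    case False
    then have "rg_adj H \<alpha> lab (E - {{h0, \<alpha> h0}}) x y" unfolding rg_adj_def using h by auto
    with step(3) show ?thesis by (rule rtranclp.rtrancl_into_rtrancl)
  qed
qed simp

lemma rg_connected_remove_edge:
  assumes rg: "ribbon_graph H \<sigma> \<alpha>" and conn: "rg_connected H \<alpha> lab n E"
    and h0: "h0 \<in> H" and u: "u \<in> {1..n}"
    and "rg_reach H \<alpha> lab (E - {{h0, \<alpha> h0}}) u (lab h0)"
    and "rg_reach H \<alpha> lab (E - {{h0, \<alpha> h0}}) u (lab (\<alpha> h0))"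
  shows "rg_connected H \<alpha> lab n (E - {{h0, \<alpha> h0}})"
  unfolding rg_connected_def
proof (intro ballI)
  fix x y assume "x \<in> {1..n}" "y \<in> {1..n}"
  then have "rg_reach H \<alpha> lab (E - {{h0, \<alpha> h0}}) u x" "rg_reach H \<alpha> lab (E - {{h0, \<alpha> h0}}) u y"
    using rg_reach_remove_edge[OF rg h0] assms(5,6) conn u unfolding rg_connected_def by blast+
  then show "rg_reach H \<alpha> lab (E - {{h0, \<alpha> h0}}) x y"
    using rg_reach_sym[OF rg] unfolding rg_reach_def by (meson rtranclp_trans)
qed

lemma sum_vp_swap:
  assumes "finite H" "\<forall>i\<in>C. vp H \<alpha> lab w i = b i"
  shows "(\<Sum>v\<in>C. s v * b v) = (\<Sum>f\<in>rg_edges H \<alpha>. w f * (\<Sum>v\<in>C. s v * incid \<alpha> lab v f))"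
proof -
  have "(\<Sum>v\<in>C. s v * b v) = (\<Sum>v\<in>C. s v * vp H \<alpha> lab w v)" using assms(2) by simp
  also have "\<dots> = (\<Sum>v\<in>C. \<Sum>f\<in>rg_edges H \<alpha>. s v * (incid \<alpha> lab v f * w f))"
    unfolding vp_def by (simp add: sum_distrib_left)
  also have "\<dots> = (\<Sum>f\<in>rg_edges H \<alpha>. \<Sum>v\<in>C. s v * (incid \<alpha> lab v f * w f))"
    by (rule sum.swap)
  also have "\<dots> = (\<Sum>f\<in>rg_edges H \<alpha>. w f * (\<Sum>v\<in>C. s v * incid \<alpha> lab v f))"
    by (simp add: sum_distrib_left mult_ac)
  finally show ?thesis .
qed

lemma sum_vp_colour_sign:
  assumes rg: "ribbon_graph H \<sigma> \<alpha>" and C: "finite C"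
    and vp: "\<forall>i\<in>C. vp H \<alpha> lab w i = b i" and e: "e \<in> rg_edges H \<alpha>"
    and closed: "\<And>h. h \<in> H \<Longrightarrow> {h, \<alpha> h} \<noteq> e \<Longrightarrow> lab h \<in> C \<Longrightarrow>
        lab (\<alpha> h) \<in> C \<and> col (lab h) \<noteq> col (lab (\<alpha> h))"
  shows "(\<Sum>v\<in>C. colour_sign col v * b v) = w e * (\<Sum>v\<in>C. colour_sign col v * incid \<alpha> lab v e)"
proof -
  let ?s = "colour_sign col"
  have fin: "finite (rg_edges H \<alpha>)" using rg finite_rg_edges unfolding ribbon_graph_def by blast
  have cancel: "(\<Sum>v\<in>C. ?s v * incid \<alpha> lab v f) = 0" if f: "f \<in> rg_edges H \<alpha> - {e}" for f
  proof -
    obtain h where h: "h \<in> H" "f = {h, \<alpha> h}" using f unfolding rg_edges_def by auto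
    note flip = ribbon_graph_edge_flip[OF rg h(1)]
    have "lab h \<in> C \<longleftrightarrow> lab (\<alpha> h) \<in> C"
      using closed[of h] closed[of "\<alpha> h"] flip f h by auto
    moreover have "lab h \<in> C \<Longrightarrow> col (lab h) \<noteq> col (lab (\<alpha> h))" using closed h f by auto
    ultimately show ?thesis
      unfolding h(2) sum_incid_edge[OF C] by (auto simp: colour_sign_def)
  qed
  have "(\<Sum>v\<in>C. ?s v * b v) = (\<Sum>f\<in>rg_edges H \<alpha>. w f * (\<Sum>v\<in>C. ?s v * incid \<alpha> lab v f))"
    using sum_vp_swap rg vp unfolding ribbon_graph_def by blast
  also have "\<dots> = w e * (\<Sum>v\<in>C. ?s v * incid \<alpha> lab v e)"
  proof -
    have "(\<Sum>f\<in>rg_edges H \<alpha> - {e}. w f * (\<Sum>v\<in>C. ?s v * incid \<alpha> lab v f)) = 0"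
      using cancel by simp
    then show ?thesis
      using sum.remove[OF fin e, of "\<lambda>f. w f * (\<Sum>v\<in>C. ?s v * incid \<alpha> lab v f)"] by simp
  qed
  finally show ?thesis .
qed

lemma bridge_weight_eq_signed_sum:
  assumes rg: "ribbon_graph H \<sigma> \<alpha>" and labels: "lab ` H \<subseteq> {1..n}"
    and conn: "rg_connected H \<alpha> lab n (rg_edges H \<alpha>)"
    and vp: "\<forall>i\<in>{1..n}. vp H \<alpha> lab w i = b i"
    and bridge: "is_bridge H \<alpha> lab n e"
    and comp: "rg_component H \<alpha> lab n (rg_edges H \<alpha> - {e}) C"
    and col: "proper_colouring H \<alpha> lab (rg_edges H \<alpha> - {e}) C col"
    and black: "\<exists>h\<in>e. lab h \<in> C \<and> col (lab h)"
  shows "w e = (\<Sum>i\<in>{v\<in>C. col v}. b i) - (\<Sum>j\<in>{v\<in>C. \<not> col v}. b j)"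
proof -
  have e: "e \<in> rg_edges H \<alpha>" using bridge unfolding is_bridge_def by simp
  then obtain h0 where h0: "h0 \<in> H" "e = {h0, \<alpha> h0}" unfolding rg_edges_def by auto
  obtain u where u: "u \<in> {1..n}" "C = {v\<in>{1..n}. rg_reach H \<alpha> lab (rg_edges H \<alpha> - {e}) u v}"
    using comp unfolding rg_component_def by auto
  have C: "finite C" "C \<subseteq> {1..n}" using u by auto
  have "\<not> (lab h0 \<in> C \<and> lab (\<alpha> h0) \<in> C)"
    using bridge rg_connected_remove_edge[OF rg conn h0(1) u(1)] unfolding is_bridge_def h0(2) u(2)
    by auto
  with black h0(2) have "(\<Sum>v\<in>C. colour_sign col v * incid \<alpha> lab v e) = 1"
    unfolding h0(2) sum_incid_edge[OF C(1)] by (auto simp: colour_sign_def)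
  moreover have "(\<Sum>v\<in>C. colour_sign col v * b v) = w e * (\<Sum>v\<in>C. colour_sign col v * incid \<alpha> lab v e)"
  proof (rule sum_vp_colour_sign[OF rg C(1) _ e])
    show "\<forall>i\<in>C. vp H \<alpha> lab w i = b i" using vp C(2) by auto
    fix h assume "h \<in> H" "{h, \<alpha> h} \<noteq> e" "lab h \<in> C"
    moreover have "{h, \<alpha> h} \<in> rg_edges H \<alpha>" using \<open>h \<in> H\<close> unfolding rg_edges_def by auto
    ultimately show "lab (\<alpha> h) \<in> C \<and> col (lab h) \<noteq> col (lab (\<alpha> h))"
      using rg_component_closed[OF rg labels comp] col unfolding proper_colouring_def by auto
  qed
  ultimately show ?thesis using sum_colour_sign[OF C(1)] by simp
qed

lemma nonbridge_weight_eq_half_signed_sum: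
  assumes rg: "ribbon_graph H \<sigma> \<alpha>" and labels: "lab ` H \<subseteq> {1..n}"
    and vp: "\<forall>i\<in>{1..n}. vp H \<alpha> lab w i = b i" and e: "e \<in> rg_edges H \<alpha>"
    and col: "proper_colouring H \<alpha> lab (rg_edges H \<alpha> - {e}) {1..n} col"
    and black: "\<forall>h\<in>e. col (lab h)"
  shows "w e = ((\<Sum>i\<in>{v\<in>{1..n}. col v}. b i) - (\<Sum>j\<in>{v\<in>{1..n}. \<not> col v}. b j)) / 2"
proof -
  obtain h0 where h0: "h0 \<in> H" "e = {h0, \<alpha> h0}" using e unfolding rg_edges_def by auto
  have "lab h0 \<in> {1..n}" "lab (\<alpha> h0) \<in> {1..n}"
    using labels ribbon_graph_edge_flip[OF rg h0(1)] h0(1) by auto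
  with black h0(2) have "(\<Sum>v\<in>{1..n}. colour_sign col v * incid \<alpha> lab v e) = 2"
    unfolding h0(2) sum_incid_edge[OF finite_atLeastAtMost] by (auto simp: colour_sign_def)
  moreover have "(\<Sum>v\<in>{1..n}. colour_sign col v * b v) =
      w e * (\<Sum>v\<in>{1..n}. colour_sign col v * incid \<alpha> lab v e)"
  proof (rule sum_vp_colour_sign[OF rg finite_atLeastAtMost vp e])
    fix h assume "h \<in> H" "{h, \<alpha> h} \<noteq> e" "lab h \<in> {1..n}"
    moreover have "{h, \<alpha> h} \<in> rg_edges H \<alpha>" using \<open>h \<in> H\<close> unfolding rg_edges_def by auto
    moreover have "lab (\<alpha> h) \<in> {1..n}" using labels ribbon_graph_edge_flip[OF rg \<open>h \<in> H\<close>] by auto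
    ultimately show "lab (\<alpha> h) \<in> {1..n} \<and> col (lab h) \<noteq> col (lab (\<alpha> h))"
      using col unfolding proper_colouring_def by auto
  qed
  ultimately show ?thesis using sum_colour_sign[OF finite_atLeastAtMost] by simp
qed

lemma static_nonbridge_bipartite:
  assumes "static_edge H \<alpha> lab n e" "\<not> is_bridge H \<alpha> lab n e"
  shows "rg_connected H \<alpha> lab n (rg_edges H \<alpha> - {e})"
    and "rg_bipartite H \<alpha> lab (rg_edges H \<alpha> - {e}) {1..n}"
proof -
  show conn: "rg_connected H \<alpha> lab n (rg_edges H \<alpha> - {e})"
    using assms unfolding static_edge_def is_bridge_def by auto
  obtain C where "rg_component H \<alpha> lab n (rg_edges H \<alpha> - {e}) C"
    and bip: "rg_bipartite H \<alpha> lab (rg_edges H \<alpha> - {e}) C"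
    using assms(1) unfolding static_edge_def by auto
  then have "C = {1..n}" using conn unfolding rg_component_def rg_connected_def by auto
  with bip show "rg_bipartite H \<alpha> lab (rg_edges H \<alpha> - {e}) {1..n}" by simp
qed

lemma proper_colouring_endpoints_eq:
  assumes rg: "ribbon_graph H \<sigma> \<alpha>" and nonbip: "\<not> rg_bipartite H \<alpha> lab (rg_edges H \<alpha>) C"
    and col: "proper_colouring H \<alpha> lab (rg_edges H \<alpha> - {e}) C col"
    and h0: "h0 \<in> H" "e = {h0, \<alpha> h0}"
  shows "col (lab h0) = col (lab (\<alpha> h0))"
proof (rule ccontr)
  assume differ: "col (lab h0) \<noteq> col (lab (\<alpha> h0))"
  have "proper_colouring H \<alpha> lab (rg_edges H \<alpha>) C col"
    unfolding proper_colouring_def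
  proof (intro ballI impI)
    fix h assume h: "h \<in> H" "{h, \<alpha> h} \<in> rg_edges H \<alpha> \<and> lab h \<in> C"
    show "col (lab h) \<noteq> col (lab (\<alpha> h))"
    proof (cases "{h, \<alpha> h} = e")
      case True
      then have "h = h0 \<or> h = \<alpha> h0" using h0(2) by (auto simp: doubleton_eq_iff)
      then show ?thesis using differ ribbon_graph_edge_flip[OF rg h0(1)] by auto
    qed (use col h in \<open>auto simp: proper_colouring_def\<close>)
  qed
  with nonbip show False unfolding rg_bipartite_def by auto
qed

theorem lemma3p3:
  fixes H :: "'h set" and \<sigma> \<alpha> :: "'h \<Rightarrow> 'h" and lab :: "'h \<Rightarrow> nat"
    and \<kappa> :: "nat multiset" and g n :: nat
    and w :: "'h set \<Rightarrow> real" and b :: "nat \<Rightarrow> real" and e :: "'h set"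
  assumes odd_parts: "\<forall>k\<in>#\<kappa>. odd k"
    and G: "in_RG H \<sigma> \<alpha> lab \<kappa> g n"
    and nonbip: "\<not> rg_bipartite H \<alpha> lab (rg_edges H \<alpha>) {1..n}"
    and vp: "\<forall>i\<in>{1..n}. vp H \<alpha> lab w i = b i"
    and static: "static_edge H \<alpha> lab n e"
  shows
    "(is_bridge H \<alpha> lab n e \<longrightarrow>
       (\<forall>C col. rg_component H \<alpha> lab n (rg_edges H \<alpha> - {e}) C \<and>
                proper_colouring H \<alpha> lab (rg_edges H \<alpha> - {e}) C col \<and>
                (\<exists>h\<in>e. lab h \<in> C \<and> col (lab h)) \<longrightarrow>
          w e = (\<Sum>i\<in>{v\<in>C. col v}. b i) - (\<Sum>j\<in>{v\<in>C. \<not> col v}. b j)))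
   \<and> (\<not> is_bridge H \<alpha> lab n e \<longrightarrow>
       rg_connected H \<alpha> lab n (rg_edges H \<alpha> - {e}) \<and>
       rg_bipartite H \<alpha> lab (rg_edges H \<alpha> - {e}) {1..n} \<and>
       (\<exists>col. proper_colouring H \<alpha> lab (rg_edges H \<alpha> - {e}) {1..n} col \<and>
              (\<forall>h\<in>e. col (lab h))) \<and>
       (\<forall>col. proper_colouring H \<alpha> lab (rg_edges H \<alpha> - {e}) {1..n} col \<and>
              (\<forall>h\<in>e. col (lab h)) \<longrightarrow>
          {v\<in>{1..n}. col v} \<union> {v\<in>{1..n}. \<not> col v} = {1..n} \<and>
          w e = ((\<Sum>i\<in>{v\<in>{1..n}. col v}. b i) - (\<Sum>j\<in>{v\<in>{1..n}. \<not> col v}. b j)) / 2))"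
proof -
  have rg: "ribbon_graph H \<sigma> \<alpha>" and conn: "rg_connected H \<alpha> lab n (rg_edges H \<alpha>)"
    and labels: "lab ` H \<subseteq> {1..n}"
    using G unfolding in_RG_def vertex_labelling_def by auto
  have e: "e \<in> rg_edges H \<alpha>" using static unfolding static_edge_def by simp
  then obtain h0 where h0: "h0 \<in> H" "e = {h0, \<alpha> h0}" unfolding rg_edges_def by auto
  have black_colouring: "\<exists>col. proper_colouring H \<alpha> lab (rg_edges H \<alpha> - {e}) {1..n} col \<and>
      (\<forall>h\<in>e. col (lab h))" if bip: "rg_bipartite H \<alpha> lab (rg_edges H \<alpha> - {e}) {1..n}"
  proof -
    obtain col where col: "proper_colouring H \<alpha> lab (rg_edges H \<alpha> - {e}) {1..n} col"
      using bip unfolding rg_bipartite_def by auto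
    have "col (lab h0) = col (lab (\<alpha> h0))"
      using proper_colouring_endpoints_eq[OF rg nonbip col h0] .
    moreover have "proper_colouring H \<alpha> lab (rg_edges H \<alpha> - {e}) {1..n} (Not \<circ> col)"
      using col unfolding proper_colouring_def by auto
    ultimately show ?thesis using col h0(2) by (cases "col (lab h0)") force+
  qed
  show ?thesis
    using bridge_weight_eq_signed_sum[OF rg labels conn vp]
      nonbridge_weight_eq_half_signed_sum[OF rg labels vp e]
      static_nonbridge_bipartite[OF static] black_colouring
    by blast
qed

end
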